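(* Let $E$ be a finite set and let $f:\mathbb{Z}_+^E\to\mathbb{R}_{\ge 0}$ be a non-negative lattice submodular function. Then for every $\mathbf{s}\in\mathbb{Z}_+^E$ and every $\mathbf{x},\mathbf{y}\in\mathbb{Z}_+^E$ with $\mathbf{x}\wedge\mathbf{y}=\mathbf{0}$, $$f(\mathbf{s})\le f(\mathbf{s}\vee\mathbf{x})+f(\mathbf{s}\vee\mathbf{y}).$$
   Context: For $\mathbf{x},\mathbf{y}\in\mathbb{Z}_+^E$, $\mathbf{x}\wedge\mathbf{y}$ and $\mathbf{x}\vee\mathbf{y}$ denote the coordinatewise minimum and maximum, respectively. A function $f:\mathbb{Z}_+^E\to\mathbb{R}$ is lattice submodular if $f(\mathbf{x})+f(\mathbf{y})\ge f(\mathbf{x}\vee\mathbf{y})+f(\mathbf{x}\wedge\mathbf{y})$ for all $\mathbf{x},\mathbf{y}\in\mathbb{Z}_+^E$. *)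

theory Defs
  imports Complex_Main
begin

text \<open>Vectors in Z_+^E are functions E => nat, E a finite type.
  Coordinatewise min/max are inf/sup of the pointwise lattice.\<close>

definition lattice_submodular :: "(('e \<Rightarrow> nat) \<Rightarrow> real) \<Rightarrow> bool" where
  "lattice_submodular f \<longleftrightarrow>
     (\<forall>x y. f x + f y \<ge> f (sup x y) + f (inf x y))"

end

theory Submission
  imports Defs
begin

lemma inf_sup_sup_eq_if_disjoint:
  fixes s x y :: "'a::{distrib_lattice, order_bot}"
  assumes "inf x y = bot"
  shows "inf (sup s x) (sup s y) = s"
  by (simp add: sup_inf_distrib1[symmetric] assms sup_absorb1)

lemma lattice_submodularD:
  assumes "lattice_submodular f"
  shows "f (sup a b) + f (inf a b) \<le> f a + f b"
  using assms unfolding lattice_submodular_def by blast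

theorem lemma1:
  fixes f :: "('e::finite \<Rightarrow> nat) \<Rightarrow> real"
  assumes nonneg: "\<And>z. f z \<ge> 0"
    and submod: "lattice_submodular f"
    and disj: "inf x y = (\<lambda>_. 0)"
  shows "f s \<le> f (sup s x) + f (sup s y)"
proof -
  have "inf (sup s x) (sup s y) = s"
    using disj by (intro inf_sup_sup_eq_if_disjoint) (simp add: bot_fun_def bot_nat_def)
  then have "f (sup (sup s x) (sup s y)) + f s \<le> f (sup s x) + f (sup s y)"
    using lattice_submodularD[OF submod, of "sup s x" "sup s y"] by simp
  then show ?thesis
    using nonneg[of "sup (sup s x) (sup s y)"] by linarith
qed

end
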